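(* Consider a 3-S 3-D MUN-D over $\mathbb{F}_{2^m}$ with block time-varying LECs (as in the context), in which the min-cut between $S_i$ and $T_j$ is at least $1$ for all $i,j$, and suppose $\eta(0)$ is not a constant. Then $X_i'(q)$ can be recovered from $Y_i^{(q\oplus k)}$ for all $i$ and all $q=1,2,\dots,k-1$ if and only if $X_i'(0)$ can be recovered from $Y_i^{(0\oplus k)}$ for all $i$.
   Context: A 3-S 3-D MUN-D: finite directed acyclic graph with unit-delay links, sources $S_1,S_2,S_3$ (one process each), destinations $T_1,T_2,T_3$ ($T_i$ demands $S_i$'s process), min-cut between $S_i$ and $T_i$ equal to $1$; for an LEC vector $\underline{\varepsilon}$, $M_{ij}(\underline{\varepsilon},D)\in\mathbb{F}_{2^m}[\underline{\varepsilon}][D]$ is the scalar transfer polynomial from $S_i$ to $T_j$ (common delay removed) and $M_{ij}(\underline{\varepsilon},x)$ its value at $D=x$. Block time-varying scheme: $k\mid 2^m-1$, $\alpha\in\mathbb{F}_{2^m}$ has multiplicative order $k$, $n'$ is a positive integer, and the LECs take independent values $\underline{\varepsilon}_1,\dots,\underline{\varepsilon}_{2n'+1}$ on $2n'+1$ consecutive blocks (each block of $k$ symbols plus a cyclic prefix, with DFT/IDFT of length $k$); for $0\le q\le k-1$ the $q$-th subchannel is $Y_j^{(q\oplus k)}=\sum_{i=1}^3M^q_{ij}V_i^{(q)}X_i'(q)$ with $M^q_{ij}=\mathrm{diag}\big(M_{ij}(\underline{\varepsilon}_1,\alpha^q),\dots,M_{ij}(\underline{\varepsilon}_{2n'+1},\alpha^q)\big)$,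 $X_1'(q)$ of length $n'+1$ and $X_2'(q),X_3'(q)$ of length $n'$. Precoders: $W=[1\cdots1]^T$ of length $2n'+1$, $U^{(q)}=(M^q_{12})^{-1}M^q_{32}(M^q_{31})^{-1}M^q_{21}(M^q_{23})^{-1}M^q_{13}$, $R^{(q)}=M^q_{13}(M^q_{23})^{-1}$, $S^{(q)}=M^q_{12}(M^q_{32})^{-1}$, $V_1^{(q)}=[W\ U^{(q)}W\cdots(U^{(q)})^{n'}W]$, $V_2^{(q)}=[R^{(q)}W\ R^{(q)}U^{(q)}W\cdots R^{(q)}(U^{(q)})^{n'-1}W]$, $V_3^{(q)}=[S^{(q)}U^{(q)}W\cdots S^{(q)}(U^{(q)})^{n'}W]$. "$X_i'(q)$ can be recovered from $Y_i^{(q\oplus k)}$ for all $i$" means that the determinants of $[V_1^{(q)}\ (M^q_{11})^{-1}M^q_{21}V_2^{(q)}]$, $[(M^q_{12})^{-1}M^q_{22}V_2^{(q)}\ V_1^{(q)}]$ and $[(M^q_{13})^{-1}M^q_{33}V_3^{(q)}\ V_1^{(q)}]$ are nonzero rational functions of $(\underline{\varepsilon}_1,\dots,\underline{\varepsilon}_{2n'+1})$. Finally $\eta(q)=\dfrac{M_{21}(\underline{\varepsilon},\alpha^q)M_{32}(\underline{\varepsilon},\alpha^q)M_{13}(\underline{\varepsilon},\alpha^q)}{M_{31}(\underline{\varepsilon},\alpha^q)M_{23}(\underline{\varepsilon},\alpha^q)M_{12}(\underline{\varepsilon},\alpha^q)}$, and "constant" means independent of $\underline{\varepsilon}$. *)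

theory Defs
  imports "HOL-Library.Poly_Mapping" "HOL-Library.Product_Lexorder" "HOL-Library.Option_ord"
    "HOL-Computational_Algebra.Polynomial" "HOL-Computational_Algebra.Fraction_Field"
    "Jordan_Normal_Form.Determinant"
begin

definition is_path :: "'e set \<Rightarrow> ('e \<Rightarrow> 'v) \<Rightarrow> ('e \<Rightarrow> 'v) \<Rightarrow> 'v \<Rightarrow> 'v \<Rightarrow> 'e list \<Rightarrow> bool" where
  "is_path E tl_of hd_of s t P \<longleftrightarrow> P \<noteq> [] \<and> set P \<subseteq> E \<and> tl_of (hd P) = s \<and> hd_of (last P) = t
     \<and> (\<forall>l < length P - 1. hd_of (P ! l) = tl_of (P ! Suc l))"

definition paths :: "'e set \<Rightarrow> ('e \<Rightarrow> 'v) \<Rightarrow> ('e \<Rightarrow> 'v) \<Rightarrow> 'v \<Rightarrow> 'v \<Rightarrow> 'e list set" where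
  "paths E tl_of hd_of s t = {P. is_path E tl_of hd_of s t P}"

definition acyclic_net :: "'e set \<Rightarrow> ('e \<Rightarrow> 'v) \<Rightarrow> ('e \<Rightarrow> 'v) \<Rightarrow> bool" where
  "acyclic_net E tl_of hd_of \<longleftrightarrow> (\<forall>v P. \<not> is_path E tl_of hd_of v v P)"

definition is_cut :: "'e set \<Rightarrow> ('e \<Rightarrow> 'v) \<Rightarrow> ('e \<Rightarrow> 'v) \<Rightarrow> 'v \<Rightarrow> 'v \<Rightarrow> 'e set \<Rightarrow> bool" where
  "is_cut E tl_of hd_of s t C \<longleftrightarrow> C \<subseteq> E \<and> paths (E - C) tl_of hd_of s t = {}"

definition mincut :: "'e set \<Rightarrow> ('e \<Rightarrow> 'v) \<Rightarrow> ('e \<Rightarrow> 'v) \<Rightarrow> 'v \<Rightarrow> 'v \<Rightarrow> nat" where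
  "mincut E tl_of hd_of s t = (LEAST n. \<exists>C. is_cut E tl_of hd_of s t C \<and> card C = n)"

text \<open>LEC variables, encoded as tuples (a linear order is needed for the
  multivariate polynomial ring to be an integral domain):
  source coefficient of source i on its outgoing edge e: (i, None, Some e);
  coefficient between adjacent edges e, e': (0, Some e, Some e');
  coefficient of incoming edge e at destination j: (j, Some e, None).\<close>

type_synonym 'e lvar = "nat \<times> 'e option \<times> 'e option"

definition src_var :: "nat \<Rightarrow> 'e \<Rightarrow> 'e lvar" where "src_var i e = (i, None, Some e)"
definition adj_var :: "'e \<Rightarrow> 'e \<Rightarrow> 'e lvar" where "adj_var e e' = (0, Some e, Some e')"
definition dst_var :: "'e \<Rightarrow> nat \<Rightarrow> 'e lvar" where "dst_var e j = (j, Some e, None)"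

type_synonym ('w, 'a) mpoly = "('w \<Rightarrow>\<^sub>0 nat) \<Rightarrow>\<^sub>0 'a"

text \<open>Monomial (product of LECs) along a path P from source i to destination j;
  f renames the LEC variables (used for independent copies in different blocks).\<close>
definition path_mono :: "('e lvar \<Rightarrow> 'w) \<Rightarrow> nat \<Rightarrow> nat \<Rightarrow> 'e list \<Rightarrow> ('w \<Rightarrow>\<^sub>0 nat)" where
  "path_mono f i j P =
     Poly_Mapping.single (f (src_var i (hd P))) 1
     + (\<Sum>l < length P - 1. Poly_Mapping.single (f (adj_var (P ! l) (P ! Suc l))) 1)
     + Poly_Mapping.single (f (dst_var (last P) j)) 1"

text \<open>Transfer polynomial M_ij(eps, D) in F[eps][D]: every link has unit delay, a path
  of length L contributes D^L; the common delay (minimal path length) is removed.\<close>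
definition transfer :: "'e set \<Rightarrow> ('e \<Rightarrow> 'v) \<Rightarrow> ('e \<Rightarrow> 'v) \<Rightarrow> (nat \<Rightarrow> 'v) \<Rightarrow> (nat \<Rightarrow> 'v)
    \<Rightarrow> ('e lvar \<Rightarrow> 'w) \<Rightarrow> nat \<Rightarrow> nat \<Rightarrow> ('w, 'a::comm_semiring_1) mpoly poly" where
  "transfer E tl_of hd_of S T f i j =
     (let Ps = paths E tl_of hd_of (S i) (T j); d = Min (length ` Ps) in
      \<Sum>P\<in>Ps. monom (Poly_Mapping.single (path_mono f i j P) 1) (length P - d))"

definition transfer_at :: "'e set \<Rightarrow> ('e \<Rightarrow> 'v) \<Rightarrow> ('e \<Rightarrow> 'v) \<Rightarrow> (nat \<Rightarrow> 'v) \<Rightarrow> (nat \<Rightarrow> 'v)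
    \<Rightarrow> ('e lvar \<Rightarrow> 'w) \<Rightarrow> nat \<Rightarrow> nat \<Rightarrow> 'a::comm_semiring_1 \<Rightarrow> ('w, 'a) mpoly" where
  "transfer_at E tl_of hd_of S T f i j x =
     poly (transfer E tl_of hd_of S T f i j) (Poly_Mapping.single 0 x)"

definition rf :: "'b::idom \<Rightarrow> 'b fract" where "rf p = Fract p 1"

definition eta :: "'e::linorder set \<Rightarrow> ('e \<Rightarrow> 'v) \<Rightarrow> ('e \<Rightarrow> 'v) \<Rightarrow> (nat \<Rightarrow> 'v) \<Rightarrow> (nat \<Rightarrow> 'v)
    \<Rightarrow> 'a::field \<Rightarrow> nat \<Rightarrow> ('e lvar, 'a) mpoly fract" where
  "eta E tl_of hd_of S T \<alpha> q =
     (let M = (\<lambda>i j. rf (transfer_at E tl_of hd_of S T id i j (\<alpha> ^ q))) in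
      (M 2 1 * M 3 2 * M 1 3) / (M 3 1 * M 2 3 * M 1 2))"

text \<open>Block t (t = 0..2n', i.e. blocks 1..2n'+1) uses its own independent copy
  (t, v) of each LEC variable v.\<close>
type_synonym 'e bvar = "nat \<times> 'e lvar"

definition diag_m :: "nat \<Rightarrow> (nat \<Rightarrow> 'b::zero) \<Rightarrow> 'b mat" where
  "diag_m N d = mat N N (\<lambda>(r, c). if r = c then d r else 0)"

definition Mq :: "'e::linorder set \<Rightarrow> ('e \<Rightarrow> 'v) \<Rightarrow> ('e \<Rightarrow> 'v) \<Rightarrow> (nat \<Rightarrow> 'v) \<Rightarrow> (nat \<Rightarrow> 'v)
    \<Rightarrow> 'a::field \<Rightarrow> nat \<Rightarrow> nat \<Rightarrow> nat \<Rightarrow> nat \<Rightarrow> ('e bvar, 'a) mpoly fract mat" where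
  "Mq E tl_of hd_of S T \<alpha> n' q i j =
     diag_m (2 * n' + 1) (\<lambda>t. rf (transfer_at E tl_of hd_of S T (\<lambda>v. (t, v)) i j (\<alpha> ^ q)))"

text \<open>(M^q_ij)^{-1}: the inverse of a diagonal matrix is the diagonal matrix of inverses.\<close>
definition Mq_inv :: "'e::linorder set \<Rightarrow> ('e \<Rightarrow> 'v) \<Rightarrow> ('e \<Rightarrow> 'v) \<Rightarrow> (nat \<Rightarrow> 'v) \<Rightarrow> (nat \<Rightarrow> 'v)
    \<Rightarrow> 'a::field \<Rightarrow> nat \<Rightarrow> nat \<Rightarrow> nat \<Rightarrow> nat \<Rightarrow> ('e bvar, 'a) mpoly fract mat" where
  "Mq_inv E tl_of hd_of S T \<alpha> n' q i j =
     diag_m (2 * n' + 1) (\<lambda>t. inverse (rf (transfer_at E tl_of hd_of S T (\<lambda>v. (t, v)) i j (\<alpha> ^ q))))"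

definition recoverable_at :: "'e::linorder set \<Rightarrow> ('e \<Rightarrow> 'v) \<Rightarrow> ('e \<Rightarrow> 'v) \<Rightarrow> (nat \<Rightarrow> 'v) \<Rightarrow> (nat \<Rightarrow> 'v)
    \<Rightarrow> 'a::field \<Rightarrow> nat \<Rightarrow> nat \<Rightarrow> bool" where
  "recoverable_at E tl_of hd_of S T (\<alpha>::'a) n' q \<longleftrightarrow>
    (let N = 2 * n' + 1;
         M = Mq E tl_of hd_of S T \<alpha> n' q;
         Mi = Mq_inv E tl_of hd_of S T \<alpha> n' q;
         W = vec N (\<lambda>_. 1 :: ('e bvar, 'a) mpoly fract);
         U = Mi 1 2 * M 3 2 * Mi 3 1 * M 2 1 * Mi 2 3 * M 1 3;
         R = M 1 3 * Mi 2 3;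
         S' = M 1 2 * Mi 3 2;
         V1 = mat_of_cols N (map (\<lambda>c. (U ^\<^sub>m c) *\<^sub>v W) [0..<n' + 1]);
         V2 = mat_of_cols N (map (\<lambda>c. R *\<^sub>v ((U ^\<^sub>m c) *\<^sub>v W)) [0..<n']);
         V3 = mat_of_cols N (map (\<lambda>c. S' *\<^sub>v ((U ^\<^sub>m (c + 1)) *\<^sub>v W)) [0..<n'])
     in det (mat_of_cols N (cols V1 @ cols (Mi 1 1 * M 2 1 * V2))) \<noteq> 0
      \<and> det (mat_of_cols N (cols (Mi 1 2 * M 2 2 * V2) @ cols V1)) \<noteq> 0
      \<and> det (mat_of_cols N (cols (Mi 1 3 * M 3 3 * V3) @ cols V1)) \<noteq> 0)"

end

theory Submission
  imports Defs
begin

text \<open>Substituting \<open>x \<cdot> \<epsilon>\<close> for every link-to-link coefficient \<open>\<epsilon>\<close>, while keeping the source and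
  destination coefficients, multiplies the monomial of a path with \<open>L\<close> links by \<open>x\<^sup>L\<^sup>-\<^sup>1\<close>.
  Hence it sends \<open>M\<^sub>i\<^sub>j(\<epsilon>, 1)\<close> to \<open>x\<^sup>d\<^sup>-\<^sup>1 M\<^sub>i\<^sub>j(\<epsilon>, x)\<close>, where \<open>d\<close> is the common delay.
  The substitution extends to a field homomorphism of the rational functions in the LECs of
  all blocks, and under it each determinant in the recoverability condition only acquires
  nonzero column factors. Taking \<open>x = \<alpha>\<^sup>q\<close>, recoverability on subchannel \<open>q\<close> is therefore
  equivalent to recoverability on subchannel \<open>0\<close> for every \<open>q\<close>; this needs only \<open>\<alpha> \<noteq> 0\<close>,
  not the hypotheses on the min-cuts or on \<open>\<eta>\<close>.\<close>

section \<open>Scaling a set of variables in a multivariate polynomial\<close>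

definition var_degree :: "('w \<Rightarrow> bool) \<Rightarrow> ('w \<Rightarrow>\<^sub>0 nat) \<Rightarrow> nat" where
  "var_degree P \<mu> = Sum_any (\<lambda>v. Poly_Mapping.lookup \<mu> v when P v)"

lemma var_degree_add: "var_degree P (\<mu> + \<nu>) = var_degree P \<mu> + var_degree P \<nu>"
proof -
  have fin: "finite {v. (Poly_Mapping.lookup \<kappa> v when P v) \<noteq> 0}" for \<kappa>
    by (rule finite_subset[of _ "Poly_Mapping.keys \<kappa>"]) (auto simp: in_keys_iff)
  show ?thesis
    unfolding var_degree_def lookup_add when_add_distrib by (rule Sum_any.distrib[OF fin fin])
qed

lemma var_degree_single: "var_degree P (Poly_Mapping.single a n) = (if P a then n else 0)"
proof -
  have "(\<lambda>v. Poly_Mapping.lookup (Poly_Mapping.single a n) v when P v) =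
        (\<lambda>v. (if P a then n else 0) when v = a)"
    by (auto simp: lookup_single when_def fun_eq_iff)
  then show ?thesis unfolding var_degree_def by (simp only:) simp
qed

lemma var_degree_zero [simp]: "var_degree P 0 = 0"
  by (simp add: var_degree_def)

lemma var_degree_sum: "var_degree P (sum g A) = (\<Sum>a\<in>A. var_degree P (g a))"
  by (induction A rule: infinite_finite_induct)
     (auto simp: var_degree_add)

text \<open>The substitution \<open>v \<mapsto> x \<cdot> v\<close> for the variables \<open>v\<close> satisfying \<open>P\<close>.\<close>

definition scale_vars :: "('w \<Rightarrow> bool) \<Rightarrow> 'a::field \<Rightarrow> ('w, 'a) mpoly \<Rightarrow> ('w, 'a) mpoly" where
  "scale_vars P x p = Poly_Mapping.mapp (\<lambda>\<mu> c. x ^ var_degree P \<mu> * c) p"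

lemma lookup_scale_vars:
  "Poly_Mapping.lookup (scale_vars P x p) \<mu> = x ^ var_degree P \<mu> * Poly_Mapping.lookup p \<mu>"
  by (auto simp: scale_vars_def lookup_mapp when_def in_keys_iff)

lemma scale_vars_add: "scale_vars P x (p + q) = scale_vars P x p + scale_vars P x q"
  by (rule poly_mapping_eqI) (simp add: lookup_scale_vars lookup_add distrib_left)

lemma scale_vars_one: "scale_vars P x 1 = 1"
  by (rule poly_mapping_eqI) (auto simp: lookup_scale_vars lookup_one when_def)

lemma scale_vars_single:
  "scale_vars P x (Poly_Mapping.single \<mu> c) = Poly_Mapping.single \<mu> (x ^ var_degree P \<mu> * c)"
  by (rule poly_mapping_eqI) (auto simp: lookup_scale_vars lookup_single when_def)

lemma scale_vars_sum: "scale_vars P x (sum g A) = (\<Sum>a\<in>A. scale_vars P x (g a))"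
  by (induction A rule: infinite_finite_induct)
     (auto simp: scale_vars_add scale_vars_single[of P x 0 0, simplified])

lemma scale_vars_eq_0_iff: "x \<noteq> 0 \<Longrightarrow> scale_vars P x p = 0 \<longleftrightarrow> p = 0"
  by (auto simp: poly_mapping_eq_iff fun_eq_iff lookup_scale_vars)

lemma scale_vars_mult:
  fixes p q :: "('w::linorder, 'a::field) mpoly"
  shows "scale_vars P x (p * q) = scale_vars P x p * scale_vars P x q"
proof (rule poly_mapping_eqI)
  fix k
  define F where
    "F = (\<lambda>l. Poly_Mapping.lookup p l * Sum_any (\<lambda>r. Poly_Mapping.lookup q r when k = l + r))"
  define G where
    "G = (\<lambda>l. x ^ var_degree P l * Poly_Mapping.lookup p l *
            Sum_any (\<lambda>r. x ^ var_degree P r * Poly_Mapping.lookup q r when k = l + r))"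
  have finF: "finite {l. F l \<noteq> 0}"
    by (rule finite_subset[of _ "Poly_Mapping.keys p"]) (auto simp: F_def in_keys_iff)
  have FG: "x ^ var_degree P k * F l = G l" for l
  proof (cases "\<exists>r0. k = l + r0")
    case True
    then obtain r0 where r0: "k = l + r0" by blast
    then have "(k = l + r) \<longleftrightarrow> (r = r0)" for r by auto
    then show ?thesis unfolding F_def G_def using r0 by (simp add: var_degree_add power_add)
  qed (simp add: F_def G_def)
  have "Poly_Mapping.lookup (scale_vars P x (p * q)) k = x ^ var_degree P k * Sum_any F"
    by (simp add: lookup_scale_vars lookup_mult F_def)
  also have "\<dots> = Sum_any (\<lambda>l. x ^ var_degree P k * F l)" by (rule Sum_any_right_distrib[OF finF])
  also have "\<dots> = Sum_any G" using FG by simp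
  also have "\<dots> = Poly_Mapping.lookup (scale_vars P x p * scale_vars P x q) k"
    by (simp add: lookup_mult lookup_scale_vars G_def mult.assoc)
  finally show "Poly_Mapping.lookup (scale_vars P x (p * q)) k =
      Poly_Mapping.lookup (scale_vars P x p * scale_vars P x q) k" .
qed

text \<open>The extension to the fraction field, evaluated on an arbitrary representative;
  \<open>scale_vars_fract_Fract\<close> shows that the choice does not matter.\<close>

definition scale_vars_fract ::
    "('w::linorder \<Rightarrow> bool) \<Rightarrow> 'a::field \<Rightarrow> ('w, 'a) mpoly fract \<Rightarrow> ('w, 'a) mpoly fract" where
  "scale_vars_fract P x r =
     (let ab = (SOME ab. snd ab \<noteq> 0 \<and> r = Fract (fst ab) (snd ab))
      in Fract (scale_vars P x (fst ab)) (scale_vars P x (snd ab)))"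

lemma scale_vars_fract_Fract:
  assumes x: "x \<noteq> 0" and b: "b \<noteq> 0"
  shows "scale_vars_fract P x (Fract a b) = Fract (scale_vars P x a) (scale_vars P x b)"
proof -
  define ab where "ab = (SOME ab. snd ab \<noteq> 0 \<and> Fract a b = Fract (fst ab) (snd ab))"
  have "snd ab \<noteq> 0 \<and> Fract a b = Fract (fst ab) (snd ab)"
    unfolding ab_def by (rule someI[of _ "(a, b)"]) (simp add: b)
  then have nz: "snd ab \<noteq> 0" and cross: "a * snd ab = fst ab * b"
    using b by (auto simp: eq_fract)
  have "scale_vars P x a * scale_vars P x (snd ab) = scale_vars P x (fst ab) * scale_vars P x b"
    using cross by (metis scale_vars_mult)
  then have "Fract (scale_vars P x (fst ab)) (scale_vars P x (snd ab)) =
             Fract (scale_vars P x a) (scale_vars P x b)"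
    using nz b x by (subst eq_fract) (auto simp: scale_vars_eq_0_iff)
  then show ?thesis unfolding scale_vars_fract_def ab_def[symmetric] Let_def .
qed

lemma field_hom_scale_vars_fract:
  assumes x: "x \<noteq> 0"
  shows "field_hom (scale_vars_fract P x)"
proof
  fix r s
  show "scale_vars_fract P x (r + s) = scale_vars_fract P x r + scale_vars_fract P x s"
    by (cases r; cases s)
       (simp add: scale_vars_fract_Fract x scale_vars_add scale_vars_mult scale_vars_eq_0_iff)
  show "scale_vars_fract P x (r * s) = scale_vars_fract P x r * scale_vars_fract P x s"
    by (cases r; cases s)
       (simp add: scale_vars_fract_Fract x scale_vars_mult scale_vars_eq_0_iff)
next
  show "scale_vars_fract P x 1 = 1"
    by (simp add: fract_expand scale_vars_fract_Fract x scale_vars_one del: fract_collapse)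
  show "scale_vars_fract P x 0 = 0"
    using scale_vars_eq_0_iff[OF x, of P 0]
    by (simp add: fract_expand scale_vars_fract_Fract x scale_vars_one del: fract_collapse)
qed

lemma scale_vars_fract_rf: "x \<noteq> 0 \<Longrightarrow> scale_vars_fract P x (rf p) = rf (scale_vars P x p)"
  by (simp add: rf_def scale_vars_fract_Fract scale_vars_one)

lemma rf_mult: "rf (p * q) = rf p * rf q"
  by (simp add: rf_def)

lemma rf_single_0_nonzero:
  "(c::'a::field) \<noteq> 0 \<Longrightarrow> rf (Poly_Mapping.single 0 c :: ('w::linorder, 'a) mpoly) \<noteq> 0"
  by (simp add: rf_def fract_expand(1) eq_fract(1)) (metis lookup_single_eq lookup_zero)

section \<open>Transfer polynomials under scaling of the link coefficients\<close>

lemma single_0_power: "Poly_Mapping.single 0 x ^ n = Poly_Mapping.single 0 (x ^ n)"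
  by (induction n) (simp_all add: mult_single)

lemma transfer_at_eq_sum:
  "transfer_at E tl_of hd_of S T f i j (x::'a::field) =
    (\<Sum>P\<in>paths E tl_of hd_of (S i) (T j).
       Poly_Mapping.single (path_mono f i j P)
         (x ^ (length P - Min (length ` paths E tl_of hd_of (S i) (T j)))))"
  unfolding transfer_at_def transfer_def Let_def poly_sum poly_monom single_0_power
  by (simp add: mult_single)

lemma path_length_ge_min:
  assumes "finite (paths E tl_of hd_of s t)" and "P \<in> paths E tl_of hd_of s t"
  shows "1 \<le> Min (length ` paths E tl_of hd_of s t)"
    and "Min (length ` paths E tl_of hd_of s t) \<le> length P"
proof -
  have "Min (length ` paths E tl_of hd_of s t) \<in> length ` paths E tl_of hd_of s t"
    using assms by (intro Min_in) auto
  then show "1 \<le> Min (length ` paths E tl_of hd_of s t)"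
    by (auto simp: paths_def is_path_def Suc_le_eq)
  show "Min (length ` paths E tl_of hd_of s t) \<le> length P"
    using assms by (intro Min_le) auto
qed

text \<open>In block variables \<open>(t, v)\<close>, exactly the coefficients \<open>adj_var e e' = (0, Some e, Some e')\<close>
  between adjacent links have both edge components present.\<close>

definition is_link_var :: "'e bvar \<Rightarrow> bool" where
  "is_link_var v \<longleftrightarrow> fst (snd (snd v)) \<noteq> None \<and> snd (snd (snd v)) \<noteq> None"

lemma var_degree_path_mono: "var_degree is_link_var (path_mono (Pair t) i j P) = length P - 1"
  unfolding path_mono_def var_degree_add var_degree_sum var_degree_single
  by (simp add: is_link_var_def src_var_def adj_var_def dst_var_def)

lemma scale_link_vars_transfer_at_1:
  fixes x :: "'a::field"
  shows "scale_vars is_link_var x (transfer_at E tl_of hd_of S T (Pair t) i j 1) =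
    Poly_Mapping.single 0 (x ^ (Min (length ` paths E tl_of hd_of (S i) (T j)) - 1))
    * transfer_at E tl_of hd_of S T (Pair t) i j x"
proof (cases "finite (paths E tl_of hd_of (S i) (T j))")
  case False
  then show ?thesis by (simp add: transfer_at_eq_sum scale_vars_single[of _ x 0 0, simplified])
next
  case True
  define Ps where "Ps = paths E tl_of hd_of (S i) (T j)"
  define d where "d = Min (length ` Ps)"
  have split_power: "x ^ (length P - 1) = x ^ (d - 1) * x ^ (length P - d)" if "P \<in> Ps" for P
    using path_length_ge_min[OF True that[unfolded Ps_def]]
    by (simp add: d_def Ps_def power_add[symmetric])
  have "scale_vars is_link_var x (transfer_at E tl_of hd_of S T (Pair t) i j 1)
      = (\<Sum>P\<in>Ps. Poly_Mapping.single (path_mono (Pair t) i j P) (x ^ (length P - 1)))"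
    unfolding transfer_at_eq_sum scale_vars_sum Ps_def[symmetric] d_def[symmetric]
    by (simp add: scale_vars_single var_degree_path_mono)
  also have "\<dots> = (\<Sum>P\<in>Ps. Poly_Mapping.single 0 (x ^ (d - 1)) *
       Poly_Mapping.single (path_mono (Pair t) i j P) (x ^ (length P - d)))"
    by (rule sum.cong[OF refl]) (simp only: split_power mult_single add_0)
  also have "\<dots> = Poly_Mapping.single 0 (x ^ (d - 1)) * transfer_at E tl_of hd_of S T (Pair t) i j x"
    unfolding transfer_at_eq_sum Ps_def[symmetric] d_def[symmetric] by (simp add: sum_distrib_left)
  finally show ?thesis unfolding Ps_def d_def .
qed

section \<open>Recoverability for diagonal channels\<close>

lemma diag_m_eq_mat_diag: "diag_m N d = mat_diag N d"
  by (rule eq_matI) (auto simp: diag_m_def mat_diag_def)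

lemma dim_mat_diag [simp]: "dim_row (mat_diag n f) = n" "dim_col (mat_diag n f) = n"
  by (simp_all add: mat_diag_def)

lemma mat_diag_index [simp]:
  "i < n \<Longrightarrow> j < n \<Longrightarrow> mat_diag n f $$ (i, j) = (if i = j then f i else 0)"
  by (simp add: mat_diag_def)

lemma mat_diag_pow: "mat_diag n f ^\<^sub>m c = mat_diag n (\<lambda>i. (f i :: 'b::comm_semiring_1) ^ c)"
  by (induction c) (simp_all add: mult.commute)

lemma mat_diag_mult_vec:
  assumes v: "dim_vec v = n"
  shows "mat_diag n f *\<^sub>v v = vec n (\<lambda>i. (f i :: 'b::comm_semiring_1) * v $ i)"
proof (rule eq_vecI)
  fix i assume "i < dim_vec (vec n (\<lambda>i. f i * v $ i))"
  then have i: "i < n" by simp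
  have "(mat_diag n f *\<^sub>v v) $ i = (\<Sum>k\<in>{0..<n}. (if i = k then f k else 0) * v $ k)"
    using i v by (simp add: mat_diag_def scalar_prod_def)
  also have "\<dots> = (\<Sum>k\<in>{0..<n}. if k = i then f i * v $ i else 0)"
    by (rule sum.cong) auto
  finally show "(mat_diag n f *\<^sub>v v) $ i = vec n (\<lambda>i. f i * v $ i) $ i" using i by simp
qed simp

lemma det_mat_diag: "det (mat_diag n (f :: nat \<Rightarrow> 'b::comm_ring_1)) = prod_list (map f [0..<n])"
proof -
  have "upper_triangular (mat_diag n f)" by (auto simp: upper_triangular_def)
  then have "det (mat_diag n f) = prod_list (diag_mat (mat_diag n f))"
    by (rule det_upper_triangular[of _ n]) simp
  also have "diag_mat (mat_diag n f) = map f [0..<n]"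
    by (rule nth_equalityI) (auto simp: diag_mat_def)
  finally show ?thesis .
qed

lemma mat_of_cols_upt:
  "(\<And>c. c < n \<Longrightarrow> dim_vec (f c) = N) \<Longrightarrow> mat_of_cols N (map f [0..<n]) = mat N n (\<lambda>(r, c). f c $ r)"
  by (rule eq_matI) (auto simp: mat_of_cols_def)

lemma mat_of_cols_append:
  "A \<in> carrier_mat N a \<Longrightarrow> B \<in> carrier_mat N b \<Longrightarrow>
   mat_of_cols N (cols A @ cols B) =
     mat N (a + b) (\<lambda>(r, c). if c < a then A $$ (r, c) else B $$ (r, c - a))"
  by (rule eq_matI) (auto simp: mat_of_cols_def nth_append)

text \<open>The condition of \<open>recoverable_at\<close> for arbitrary diagonal channel matrices, where
  \<open>m i j t\<close> is the \<open>t\<close>-th diagonal entry of \<open>M\<^sub>i\<^sub>j\<close>.\<close>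

definition recoverable_diag :: "nat \<Rightarrow> (nat \<Rightarrow> nat \<Rightarrow> nat \<Rightarrow> 'b::field) \<Rightarrow> bool" where
  "recoverable_diag n' m \<longleftrightarrow>
    (let N = 2 * n' + 1;
         M = (\<lambda>i j. mat_diag N (m i j));
         Mi = (\<lambda>i j. mat_diag N (\<lambda>t. inverse (m i j t)));
         W = vec N (\<lambda>_. 1 :: 'b);
         U = Mi 1 2 * M 3 2 * Mi 3 1 * M 2 1 * Mi 2 3 * M 1 3;
         R = M 1 3 * Mi 2 3;
         S' = M 1 2 * Mi 3 2;
         V1 = mat_of_cols N (map (\<lambda>c. (U ^\<^sub>m c) *\<^sub>v W) [0..<n' + 1]);
         V2 = mat_of_cols N (map (\<lambda>c. R *\<^sub>v ((U ^\<^sub>m c) *\<^sub>v W)) [0..<n']);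
         V3 = mat_of_cols N (map (\<lambda>c. S' *\<^sub>v ((U ^\<^sub>m (c + 1)) *\<^sub>v W)) [0..<n'])
     in det (mat_of_cols N (cols V1 @ cols (Mi 1 1 * M 2 1 * V2))) \<noteq> 0
      \<and> det (mat_of_cols N (cols (Mi 1 2 * M 2 2 * V2) @ cols V1)) \<noteq> 0
      \<and> det (mat_of_cols N (cols (Mi 1 3 * M 3 3 * V3) @ cols V1)) \<noteq> 0)"

lemma recoverable_at_iff_recoverable_diag:
  "recoverable_at E tl_of hd_of S T (\<alpha>::'a::field) n' q \<longleftrightarrow>
   recoverable_diag n' (\<lambda>i j t. rf (transfer_at E tl_of hd_of S T (Pair t) i j (\<alpha> ^ q)))"
  unfolding recoverable_at_def recoverable_diag_def Mq_def Mq_inv_def diag_m_eq_mat_diag Let_def ..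

definition u_diag :: "(nat \<Rightarrow> nat \<Rightarrow> nat \<Rightarrow> 'b::field) \<Rightarrow> nat \<Rightarrow> 'b" where
  "u_diag m t =
     inverse (m 1 2 t) * m 3 2 t * inverse (m 3 1 t) * m 2 1 t * inverse (m 2 3 t) * m 1 3 t"

definition r_diag :: "(nat \<Rightarrow> nat \<Rightarrow> nat \<Rightarrow> 'b::field) \<Rightarrow> nat \<Rightarrow> 'b" where
  "r_diag m t = m 1 3 t * inverse (m 2 3 t)"

definition s_diag :: "(nat \<Rightarrow> nat \<Rightarrow> nat \<Rightarrow> 'b::field) \<Rightarrow> nat \<Rightarrow> 'b" where
  "s_diag m t = m 1 2 t * inverse (m 3 2 t)"

definition decoding_mat1 :: "nat \<Rightarrow> (nat \<Rightarrow> nat \<Rightarrow> nat \<Rightarrow> 'b::field) \<Rightarrow> nat \<times> nat \<Rightarrow> 'b" where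
  "decoding_mat1 n' m = (\<lambda>(r, c). if c < n' + 1 then u_diag m r ^ c
     else inverse (m 1 1 r) * m 2 1 r * (r_diag m r * u_diag m r ^ (c - (n' + 1))))"

definition decoding_mat2 :: "nat \<Rightarrow> (nat \<Rightarrow> nat \<Rightarrow> nat \<Rightarrow> 'b::field) \<Rightarrow> nat \<times> nat \<Rightarrow> 'b" where
  "decoding_mat2 n' m = (\<lambda>(r, c). if c < n'
     then inverse (m 1 2 r) * m 2 2 r * (r_diag m r * u_diag m r ^ c) else u_diag m r ^ (c - n'))"

definition decoding_mat3 :: "nat \<Rightarrow> (nat \<Rightarrow> nat \<Rightarrow> nat \<Rightarrow> 'b::field) \<Rightarrow> nat \<times> nat \<Rightarrow> 'b" where
  "decoding_mat3 n' m = (\<lambda>(r, c). if c < n'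
     then inverse (m 1 3 r) * m 3 3 r * (s_diag m r * u_diag m r ^ (c + 1)) else u_diag m r ^ (c - n'))"

lemma recoverable_diag_iff_decoding_mats:
  "recoverable_diag n' (m :: nat \<Rightarrow> nat \<Rightarrow> nat \<Rightarrow> 'b::field) \<longleftrightarrow>
     det (mat (2*n'+1) (2*n'+1) (decoding_mat1 n' m)) \<noteq> 0 \<and>
     det (mat (2*n'+1) (2*n'+1) (decoding_mat2 n' m)) \<noteq> 0 \<and>
     det (mat (2*n'+1) (2*n'+1) (decoding_mat3 n' m)) \<noteq> 0"
proof -
  define N where "N = 2 * n' + 1"
  define M where "M = (\<lambda>i j. mat_diag N (m i j))"
  define Mi where "Mi = (\<lambda>i j. mat_diag N (\<lambda>t. inverse (m i j t)))"
  define W where "W = vec N (\<lambda>_. 1 :: 'b)"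
  define U where "U = Mi 1 2 * M 3 2 * Mi 3 1 * M 2 1 * Mi 2 3 * M 1 3"
  define R where "R = M 1 3 * Mi 2 3"
  define S' where "S' = M 1 2 * Mi 3 2"
  define V1 where "V1 = mat_of_cols N (map (\<lambda>c. (U ^\<^sub>m c) *\<^sub>v W) [0..<n' + 1])"
  define V2 where "V2 = mat_of_cols N (map (\<lambda>c. R *\<^sub>v ((U ^\<^sub>m c) *\<^sub>v W)) [0..<n'])"
  define V3 where "V3 = mat_of_cols N (map (\<lambda>c. S' *\<^sub>v ((U ^\<^sub>m (c + 1)) *\<^sub>v W)) [0..<n'])"
  have U: "U = mat_diag N (u_diag m)" unfolding U_def M_def Mi_def u_diag_def by simp
  have R: "R = mat_diag N (r_diag m)" unfolding R_def M_def Mi_def r_diag_def by simp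
  have S': "S' = mat_diag N (s_diag m)" unfolding S'_def M_def Mi_def s_diag_def by simp
  have UW: "(U ^\<^sub>m c) *\<^sub>v W = vec N (\<lambda>t. u_diag m t ^ c)" for c
    unfolding U mat_diag_pow W_def by (simp add: mat_diag_mult_vec) (rule eq_vecI, auto)
  have V1: "V1 = mat N (n'+1) (\<lambda>(r, c). u_diag m r ^ c)"
    unfolding V1_def UW by (subst mat_of_cols_upt) auto
  have V2: "V2 = mat N n' (\<lambda>(r, c). r_diag m r * u_diag m r ^ c)"
    unfolding V2_def UW R by (subst mat_of_cols_upt) (auto simp: mat_diag_mult_vec)
  have V3: "V3 = mat N n' (\<lambda>(r, c). s_diag m r * u_diag m r ^ (c + 1))"
    unfolding V3_def UW S' by (subst mat_of_cols_upt) (auto simp: mat_diag_mult_vec)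
  have "mat_of_cols N (cols V1 @ cols (Mi 1 1 * M 2 1 * V2)) = mat N N (decoding_mat1 n' m)"
    unfolding V1 V2 M_def Mi_def mat_diag_diag
    by (subst mat_diag_mult_left, force, subst mat_of_cols_append, force, force)
       (rule eq_matI, auto simp: decoding_mat1_def N_def)
  moreover have "mat_of_cols N (cols (Mi 1 2 * M 2 2 * V2) @ cols V1) = mat N N (decoding_mat2 n' m)"
    unfolding V1 V2 M_def Mi_def mat_diag_diag
    by (subst mat_diag_mult_left, force, subst mat_of_cols_append, force, force)
       (rule eq_matI, auto simp: decoding_mat2_def N_def)
  moreover have "mat_of_cols N (cols (Mi 1 3 * M 3 3 * V3) @ cols V1) = mat N N (decoding_mat3 n' m)"
    unfolding V1 V3 M_def Mi_def mat_diag_diag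
    by (subst mat_diag_mult_left, force, subst mat_of_cols_append, force, force)
       (rule eq_matI, auto simp: decoding_mat3_def N_def)
  moreover have "recoverable_diag n' m \<longleftrightarrow>
     det (mat_of_cols N (cols V1 @ cols (Mi 1 1 * M 2 1 * V2))) \<noteq> 0
      \<and> det (mat_of_cols N (cols (Mi 1 2 * M 2 2 * V2) @ cols V1)) \<noteq> 0
      \<and> det (mat_of_cols N (cols (Mi 1 3 * M 3 3 * V3) @ cols V1)) \<noteq> 0"
    unfolding recoverable_diag_def Let_def V1_def V2_def V3_def U_def R_def S'_def W_def M_def
      Mi_def N_def ..
  ultimately show ?thesis unfolding N_def by simp
qed

lemma det_nonzero_iff_hom_scaled_cols:
  fixes \<phi> :: "'b::field \<Rightarrow> 'c::field"
  assumes hom: "field_hom \<phi>"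
    and g: "\<And>c. c < N \<Longrightarrow> g c \<noteq> 0"
    and B: "\<And>r c. r < N \<Longrightarrow> c < N \<Longrightarrow> B (r, c) = g c * \<phi> (A (r, c))"
  shows "det (mat N N B) \<noteq> 0 \<longleftrightarrow> det (mat N N A) \<noteq> 0"
proof -
  interpret field_hom \<phi> by (rule hom)
  have "mat N N B = map_mat \<phi> (mat N N A) * mat_diag N g"
    by (subst mat_diag_mult_right[of _ N]) (auto intro!: eq_matI simp: B mult.commute)
  then have "det (mat N N B) = \<phi> (det (mat N N A)) * prod_list (map g [0..<N])"
    by (simp add: det_mult[of _ N] det_mat_diag)
  moreover have "prod_list (map g [0..<N]) \<noteq> 0" using g by (auto simp: prod_list_zero_iff)
  ultimately show ?thesis by simp
qed

text \<open>\<open>U\<close>, \<open>R\<close> and \<open>S\<close> are rescaled by constants too, so each column of a decoding matrix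
  only picks up a nonzero factor.\<close>

lemma recoverable_diag_hom_scaled:
  fixes \<phi> :: "'b::field \<Rightarrow> 'b"
  assumes hom: "field_hom \<phi>"
    and e: "\<And>i j. e i j \<noteq> 0"
    and m': "\<And>i j t. m' i j t = e i j * \<phi> (m i j t)"
  shows "recoverable_diag n' m' \<longleftrightarrow> recoverable_diag n' m"
proof -
  interpret field_hom \<phi> by (rule hom)
  define eu where
    "eu = inverse (e 1 2) * e 3 2 * inverse (e 3 1) * e 2 1 * inverse (e 2 3) * e 1 3"
  define er where "er = e 1 3 * inverse (e 2 3)"
  define es where "es = e 1 2 * inverse (e 3 2)"
  have nonzero: "eu \<noteq> 0" "er \<noteq> 0" "es \<noteq> 0" using e by (auto simp: eu_def er_def es_def)
  have u: "u_diag m' t = eu * \<phi> (u_diag m t)" for t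
    by (simp add: u_diag_def eu_def m' hom_mult hom_inverse inverse_mult_distrib mult_ac)
  have r: "r_diag m' t = er * \<phi> (r_diag m t)" for t
    by (simp add: r_diag_def er_def m' hom_mult hom_inverse inverse_mult_distrib mult_ac)
  have s: "s_diag m' t = es * \<phi> (s_diag m t)" for t
    by (simp add: s_diag_def es_def m' hom_mult hom_inverse inverse_mult_distrib mult_ac)
  note simps = e nonzero u r s m' hom_mult hom_inverse hom_power power_mult_distrib
    inverse_mult_distrib mult_ac
  have "det (mat (2*n'+1) (2*n'+1) (decoding_mat1 n' m')) \<noteq> 0 \<longleftrightarrow>
        det (mat (2*n'+1) (2*n'+1) (decoding_mat1 n' m)) \<noteq> 0"
    by (rule det_nonzero_iff_hom_scaled_cols[OF hom, of _ "\<lambda>c. if c < n' + 1 then eu ^ c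
        else inverse (e 1 1) * e 2 1 * (er * eu ^ (c - (n' + 1)))"])
       (auto simp: decoding_mat1_def simps)
  moreover have "det (mat (2*n'+1) (2*n'+1) (decoding_mat2 n' m')) \<noteq> 0 \<longleftrightarrow>
        det (mat (2*n'+1) (2*n'+1) (decoding_mat2 n' m)) \<noteq> 0"
    by (rule det_nonzero_iff_hom_scaled_cols[OF hom, of _ "\<lambda>c. if c < n'
        then inverse (e 1 2) * e 2 2 * (er * eu ^ c) else eu ^ (c - n')"])
       (auto simp: decoding_mat2_def simps)
  moreover have "det (mat (2*n'+1) (2*n'+1) (decoding_mat3 n' m')) \<noteq> 0 \<longleftrightarrow>
        det (mat (2*n'+1) (2*n'+1) (decoding_mat3 n' m)) \<noteq> 0"
    by (rule det_nonzero_iff_hom_scaled_cols[OF hom, of _ "\<lambda>c. if c < n'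
        then inverse (e 1 3) * e 3 3 * (es * eu ^ (c + 1)) else eu ^ (c - n')"])
       (auto simp: decoding_mat3_def simps)
  ultimately show ?thesis unfolding recoverable_diag_iff_decoding_mats by blast
qed

lemma recoverable_at_iff_recoverable_at_0:
  fixes \<alpha> :: "'a::field" and E :: "'e::linorder set"
  assumes \<alpha>: "\<alpha> \<noteq> 0"
  shows "recoverable_at E tl_of hd_of S T \<alpha> n' q \<longleftrightarrow> recoverable_at E tl_of hd_of S T \<alpha> n' 0"
proof -
  define x where "x = \<alpha> ^ q"
  have x: "x \<noteq> 0" using \<alpha> by (simp add: x_def)
  define \<kappa> :: "nat \<Rightarrow> nat \<Rightarrow> ('e bvar, 'a) mpoly fract" where
    "\<kappa> i j = rf (Poly_Mapping.single 0 (x ^ (Min (length ` paths E tl_of hd_of (S i) (T j)) - 1)))"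
    for i j
  have \<kappa>: "\<kappa> i j \<noteq> 0" for i j unfolding \<kappa>_def by (rule rf_single_0_nonzero) (simp add: x)
  have "scale_vars_fract is_link_var x (rf (transfer_at E tl_of hd_of S T (Pair t) i j 1)) =
        \<kappa> i j * rf (transfer_at E tl_of hd_of S T (Pair t) i j x)" for i j t
    by (simp add: scale_vars_fract_rf[OF x] scale_link_vars_transfer_at_1 rf_mult \<kappa>_def)
  then have scaled: "rf (transfer_at E tl_of hd_of S T (Pair t) i j x) = inverse (\<kappa> i j) *
      scale_vars_fract is_link_var x (rf (transfer_at E tl_of hd_of S T (Pair t) i j (\<alpha> ^ 0)))"
    for i j t using \<kappa>[of i j] by (simp add: field_simps)
  show ?thesis
    unfolding recoverable_at_iff_recoverable_diag x_def[symmetric]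
    by (rule recoverable_diag_hom_scaled[OF field_hom_scale_vars_fract[OF x], of "\<lambda>i j. inverse (\<kappa> i j)"])
       (simp_all add: \<kappa> scaled)
qed

theorem theorem8:
  fixes E :: "'e::linorder set" and tl_of hd_of :: "'e \<Rightarrow> 'v"
    and S T :: "nat \<Rightarrow> 'v" and \<alpha> :: "'a::{field, finite}"
    and m k n' :: nat
  assumes fin: "finite E"
    and dag: "acyclic_net E tl_of hd_of"
    and mc_diag: "\<forall>i\<in>{1,2,3}. mincut E tl_of hd_of (S i) (T i) = 1"
    and mc_all: "\<forall>i\<in>{1,2,3}. \<forall>j\<in>{1,2,3}. mincut E tl_of hd_of (S i) (T j) \<ge> 1"
    and field_size: "card (UNIV :: 'a set) = 2 ^ m"
    and k_dvd: "k dvd 2 ^ m - 1"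
    and k_ge: "2 \<le> k"
    and alpha_ord: "\<alpha> ^ k = 1" "\<forall>j. 0 < j \<and> j < k \<longrightarrow> \<alpha> ^ j \<noteq> 1"
    and n'_pos: "0 < n'"
    and eta_nonconst: "\<not> (\<exists>c::'a. eta E tl_of hd_of S T \<alpha> 0 = rf (Poly_Mapping.single 0 c))"
  shows "(\<forall>q\<in>{1..<k}. recoverable_at E tl_of hd_of S T \<alpha> n' q)
         \<longleftrightarrow> recoverable_at E tl_of hd_of S T \<alpha> n' 0"
proof -
  have "\<alpha> \<noteq> 0" using alpha_ord(1) k_ge by (auto simp: zero_power)
  then have "recoverable_at E tl_of hd_of S T \<alpha> n' q \<longleftrightarrow> recoverable_at E tl_of hd_of S T \<alpha> n' 0"
    for q by (rule recoverable_at_iff_recoverable_at_0)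
  moreover have "1 \<in> {1..<k}" using k_ge by simp
  ultimately show ?thesis by blast
qed

end
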